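(* Let $g:\mathbb{R}^n\to\mathbb{R}$ be a convex, continuously differentiable function and let $f_d:\mathbb{R}^n\to\mathbb{R}^n$ be continuously differentiable such that $x\mapsto g(f_d(x))$ is concave. Then the optimization problem $$\max_{\alpha\ge 0}\ \min_{x\in\mathbb{R}^n}\ \{\alpha g(x)-g(f_d(x))\}$$ is equivalent to the nonlinear optimization problem $$\max_{x\in\mathbb{R}^n,\ \alpha\in\mathbb{R}}\ \{\alpha g(x)-g(f_d(x)) : \alpha\nabla_x g(x)-\nabla_x\big(g(f_d(x))\big)=0,\ \alpha\ge 0\}.$$ *)

theory Defs
  imports "HOL-Analysis.Analysis"
begin

definition cont_diff1 :: "('a::euclidean_space \<Rightarrow> 'b::real_normed_vector) \<Rightarrow> bool" where
  "cont_diff1 f \<longleftrightarrow> (\<exists>f'. (\<forall>x. (f has_derivative blinfun_apply (f' x)) (at x))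
                         \<and> continuous_on UNIV f')"

definition grad :: "('a::real_inner \<Rightarrow> real) \<Rightarrow> 'a \<Rightarrow> 'a" where
  "grad f x = (SOME D. GDERIV f x :> D)"

end

theory Submission
  imports Defs
begin

text \<open>For every \<open>\<alpha> \<ge> 0\<close> the inner objective \<open>\<alpha> g - g \<circ> f\<^sub>d\<close> is convex, being a
  nonnegative multiple of a convex function minus a concave one. For a differentiable
  convex function the first-order condition characterises the global minimisers, so the
  pairs \<open>(x, \<alpha>)\<close> with \<open>x\<close> a minimiser are exactly the pairs satisfying the stationarity
  constraint, and both problems maximise the same objective over the same set.\<close>

lemma has_derivative_imp_gderiv_adjoint:
  fixes f :: "'a::euclidean_space \<Rightarrow> real"
  assumes "(f has_derivative L) (at x)"
  shows "GDERIV f x :> adjoint L 1"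
proof -
  have "linear L"
    using assms by (rule has_derivative_linear)
  then have "L = (\<lambda>h. h \<bullet> adjoint L 1)"
    by (auto simp: adjoint_works)
  with assms show ?thesis
    by (simp add: gderiv_def)
qed

lemma gderiv_grad:
  fixes f :: "'a::euclidean_space \<Rightarrow> real"
  assumes "f differentiable (at x)"
  shows "GDERIV f x :> grad f x"
proof -
  obtain L where "(f has_derivative L) (at x)"
    using assms by (auto simp: differentiable_def)
  then have "GDERIV f x :> adjoint L 1"
    by (rule has_derivative_imp_gderiv_adjoint)
  then show ?thesis
    unfolding grad_def by (rule someI)
qed

lemma cont_diff1_imp_differentiable:
  assumes "cont_diff1 f"
  shows "f differentiable (at x)"
  using assms by (auto simp: cont_diff1_def differentiable_def)

lemma convex_on_UNIV_above_tangent: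
  fixes h :: "'a::real_normed_vector \<Rightarrow> real"
  assumes convex: "convex_on UNIV h" and deriv: "(h has_derivative L) (at x)"
  shows "h x + L (y - x) \<le> h y"
proof -
  define \<phi> where "\<phi> t = h (x + t *\<^sub>R (y - x))" for t :: real
  have "((\<lambda>t. x + t *\<^sub>R (y - x)) has_derivative (\<lambda>t. t *\<^sub>R (y - x))) (at 0)"
    by (auto intro!: derivative_eq_intros)
  then have "(\<phi> has_derivative (\<lambda>t. L (t *\<^sub>R (y - x)))) (at 0)"
    unfolding \<phi>_def by (rule has_derivative_compose) (simp add: deriv)
  then have "(\<phi> has_real_derivative L (y - x)) (at 0)"
    unfolding has_field_derivative_def
    by (rule has_derivative_eq_rhs) (auto simp: linear_scale[OF has_derivative_linear[OF deriv]])
  moreover have "convex_on UNIV \<phi>"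
  proof (rule convex_onI)
    fix s t u :: real assume u: "0 < u" "u < 1"
    have "x + ((1 - u) * s + u * t) *\<^sub>R (y - x)
        = (1 - u) *\<^sub>R (x + s *\<^sub>R (y - x)) + u *\<^sub>R (x + t *\<^sub>R (y - x))"
      by (simp add: algebra_simps)
    then show "\<phi> ((1 - u) *\<^sub>R s + u *\<^sub>R t) \<le> (1 - u) * \<phi> s + u * \<phi> t"
      unfolding \<phi>_def using convex_onD[OF convex, of u] u by simp
  qed simp
  ultimately have "\<phi> 1 - \<phi> 0 \<ge> L (y - x) * (1 - 0)"
    by (intro convex_on_imp_above_tangent) auto
  then show ?thesis
    unfolding \<phi>_def by simp
qed

lemma convex_on_UNIV_minimum_iff_derivative_zero:
  fixes h :: "'a::real_normed_vector \<Rightarrow> real"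
  assumes "convex_on UNIV h" and "(h has_derivative L) (at x)"
  shows "(\<forall>y. h x \<le> h y) \<longleftrightarrow> L = (\<lambda>v. 0)"
  using differential_zero_maxmin[of x UNIV h L] convex_on_UNIV_above_tangent[OF assms] assms(2)
  by auto

lemma convex_on_UNIV_minimum_iff_gderiv_zero:
  fixes h :: "'a::real_inner \<Rightarrow> real"
  assumes "convex_on UNIV h" and "GDERIV h x :> D"
  shows "(\<forall>y. h x \<le> h y) \<longleftrightarrow> D = 0"
proof -
  have "(\<forall>y. h x \<le> h y) \<longleftrightarrow> (\<lambda>v. v \<bullet> D) = (\<lambda>v. 0)"
    using assms by (simp add: gderiv_def convex_on_UNIV_minimum_iff_derivative_zero)
  also have "\<dots> \<longleftrightarrow> D = 0"
    by (metis inner_eq_zero_iff inner_zero_right)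
  finally show ?thesis .
qed

theorem theorem7:
  fixes g :: "real ^ 'n \<Rightarrow> real" and fd :: "real ^ 'n \<Rightarrow> real ^ 'n"
  assumes "convex_on UNIV g" and "cont_diff1 g"
    and "cont_diff1 fd"
    and "concave_on UNIV (\<lambda>x. g (fd x))"
  shows "(\<forall>\<alpha> x. \<alpha> \<ge> 0 \<longrightarrow>
            ((\<forall>y. \<alpha> * g x - g (fd x) \<le> \<alpha> * g y - g (fd y)) \<longleftrightarrow>
             \<alpha> *\<^sub>R grad g x - grad (\<lambda>z. g (fd z)) x = 0))
    \<and> (SUP p \<in> {(x, \<alpha>). \<alpha> \<ge> 0 \<and> (\<forall>y. \<alpha> * g x - g (fd x) \<le> \<alpha> * g y - g (fd y))}.
          ereal (snd p * g (fst p) - g (fd (fst p))))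
      = (SUP p \<in> {(x, \<alpha>). \<alpha> \<ge> 0 \<and> \<alpha> *\<^sub>R grad g x - grad (\<lambda>z. g (fd z)) x = 0}.
          ereal (snd p * g (fst p) - g (fd (fst p))))"
proof -
  have stationary_iff_minimum:
    "(\<forall>y. \<alpha> * g x - g (fd x) \<le> \<alpha> * g y - g (fd y)) \<longleftrightarrow>
     \<alpha> *\<^sub>R grad g x - grad (\<lambda>z. g (fd z)) x = 0" if "\<alpha> \<ge> 0" for \<alpha> x
  proof (rule convex_on_UNIV_minimum_iff_gderiv_zero)
    show "convex_on UNIV (\<lambda>y. \<alpha> * g y - g (fd y))"
      using \<open>\<alpha> \<ge> 0\<close> assms(1,4) by (intro convex_on_diff convex_on_cmul)
    have "g differentiable (at x)" "(\<lambda>z. g (fd z)) differentiable (at x)"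
      using assms(2,3) differentiable_chain_at[of fd x g]
      by (auto simp: cont_diff1_imp_differentiable o_def)
    then show "GDERIV (\<lambda>y. \<alpha> * g y - g (fd y)) x :> \<alpha> *\<^sub>R grad g x - grad (\<lambda>z. g (fd z)) x"
      using GDERIV_mult[OF GDERIV_const gderiv_grad] by (intro GDERIV_diff gderiv_grad) auto
  qed
  then have "{(x, \<alpha>). \<alpha> \<ge> 0 \<and> (\<forall>y. \<alpha> * g x - g (fd x) \<le> \<alpha> * g y - g (fd y))}
      = {(x, \<alpha>). \<alpha> \<ge> 0 \<and> \<alpha> *\<^sub>R grad g x - grad (\<lambda>z. g (fd z)) x = 0}"
    by auto
  with stationary_iff_minimum show ?thesis
    by simp
qed

end
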